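(* Let $A$ be a skew brace. For a subset $S\subseteq\mathrm{Spec}\,A$ let $K(S)=\bigcap_{I\in S}I$. Then: (i) $K(\emptyset)=A$ and $K\big(\bigcup_{\lambda\in\Lambda}T_\lambda\big)=\bigcap_{\lambda\in\Lambda}K(T_\lambda)$ for every family $\{T_\lambda\}$ of subsets of $\mathrm{Spec}\,A$; (ii) for every ideal $I$ of $A$, $KH(I)=\mathrm{Rad}\,I$, and for every subset $S\subseteq\mathrm{Spec}\,A$, $HK(S)$ is the closure of $S$ in $\mathrm{Spec}\,A$.
   Context: A (left) skew brace is a triple $(A,+,\circ)$ where $(A,+)$ and $(A,\circ)$ are groups such that $a\circ(b+c)=a\circ b-a+a\circ c$ for all $a,b,c$; common identity $e$. Put $\lambda_a(b)=-a+a\circ b$ and $a*b=-a+a\circ b-b$. An ideal is a normal subgroup $I$ of both $(A,+)$ and $(A,\circ)$ with $\lambda_a(I)\subseteq I$ for all $a$. A prime ideal is a proper ideal $P$ such that for any subsets $X,Y$ of $A$, $\{x*y\mid x\in X,y\in Y\}\subseteq P$ implies $X\subseteq P$ or $Y\subseteq P$; $\mathrm{Spec}\,A$ is the set of prime ideals. For an ideal $I$, $H(I)=\{P\in\mathrm{Spec}\,A\mid I\subseteq P\}$ and $\mathrm{Rad}\,I=\bigcap\{P\in\mathrm{Spec}\,A\mid I\subseteq P\}$. The spectral topology on $\mathrm{Spec}\,A$ has as closed sets the sets $H(I)$, $I$ an ideal (and $K(S)$ is an ideal, so $HK(S)$ is defined). *)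

theory Defs
  imports "HOL-Algebra.Coset" "HOL-Analysis.Abstract_Topology"
begin

(* A (left) skew brace is given by two groups on the same carrier:
  P, the additive group (written with the HOL-Algebra product, so a + b is
  a \<otimes>_P b and -a is inv_P a), and C, the circle group. *)

definition skew_brace :: "'a monoid \<Rightarrow> 'a monoid \<Rightarrow> bool" where
  "skew_brace P C \<longleftrightarrow> group P \<and> group C \<and> carrier P = carrier C \<and>
     (\<forall>a\<in>carrier C. \<forall>b\<in>carrier C. \<forall>c\<in>carrier C.
        a \<otimes>\<^bsub>C\<^esub> (b \<otimes>\<^bsub>P\<^esub> c)
        = ((a \<otimes>\<^bsub>C\<^esub> b) \<otimes>\<^bsub>P\<^esub> inv\<^bsub>P\<^esub> a) \<otimes>\<^bsub>P\<^esub> (a \<otimes>\<^bsub>C\<^esub> c))"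

definition brace_lambda :: "'a monoid \<Rightarrow> 'a monoid \<Rightarrow> 'a \<Rightarrow> 'a \<Rightarrow> 'a" where
  "brace_lambda P C a b = inv\<^bsub>P\<^esub> a \<otimes>\<^bsub>P\<^esub> (a \<otimes>\<^bsub>C\<^esub> b)"

definition brace_star :: "'a monoid \<Rightarrow> 'a monoid \<Rightarrow> 'a \<Rightarrow> 'a \<Rightarrow> 'a" where
  "brace_star P C a b = (inv\<^bsub>P\<^esub> a \<otimes>\<^bsub>P\<^esub> (a \<otimes>\<^bsub>C\<^esub> b)) \<otimes>\<^bsub>P\<^esub> inv\<^bsub>P\<^esub> b"

definition brace_ideal :: "'a monoid \<Rightarrow> 'a monoid \<Rightarrow> 'a set \<Rightarrow> bool" where
  "brace_ideal P C I \<longleftrightarrow> I \<subseteq> carrier C \<and> normal I P \<and> normal I C \<and>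
     (\<forall>a\<in>carrier C. brace_lambda P C a ` I \<subseteq> I)"

definition prime_ideal :: "'a monoid \<Rightarrow> 'a monoid \<Rightarrow> 'a set \<Rightarrow> bool" where
  "prime_ideal P C Q \<longleftrightarrow> brace_ideal P C Q \<and> Q \<noteq> carrier C \<and>
     (\<forall>X Y. X \<subseteq> carrier C \<longrightarrow> Y \<subseteq> carrier C \<longrightarrow>
        {brace_star P C x y | x y. x \<in> X \<and> y \<in> Y} \<subseteq> Q \<longrightarrow> X \<subseteq> Q \<or> Y \<subseteq> Q)"

definition Spec :: "'a monoid \<Rightarrow> 'a monoid \<Rightarrow> 'a set set" where
  "Spec P C = {Q. prime_ideal P C Q}"

definition Hset :: "'a monoid \<Rightarrow> 'a monoid \<Rightarrow> 'a set \<Rightarrow> 'a set set" where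
  "Hset P C I = {Q \<in> Spec P C. I \<subseteq> Q}"

(* Intersections are taken inside A, so the empty intersection is A. *)
definition Rad :: "'a monoid \<Rightarrow> 'a monoid \<Rightarrow> 'a set \<Rightarrow> 'a set" where
  "Rad P C I = carrier C \<inter> \<Inter> (Hset P C I)"

definition Kset :: "'a monoid \<Rightarrow> 'a monoid \<Rightarrow> 'a set set \<Rightarrow> 'a set" where
  "Kset P C S = carrier C \<inter> \<Inter> S"

definition spectral_topology :: "'a monoid \<Rightarrow> 'a monoid \<Rightarrow> 'a set topology" where
  "spectral_topology P C = topology (\<lambda>U. U \<subseteq> Spec P C \<and>
     (\<exists>I. brace_ideal P C I \<and> Spec P C - U = Hset P C I))"

end

theory Submission
  imports Defs
begin

(* If x \<in> I and y \<in> J for ideals I, J, then x * y lies in I \<inter> J, so a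
  prime containing I \<inter> J contains I or J; hence H(I) \<union> H(J) = H(I \<inter> J), and the sets H(I)
  are the closed sets of a topology. K and H form a Galois connection (S \<subseteq> H(I) iff
  I \<subseteq> K(S)) and K(S) is an ideal, so H(K(S)) is the least closed set containing S. *)

lemma (in group) normal_Inter:
  assumes "F \<noteq> {}" and "\<And>N. N \<in> F \<Longrightarrow> N \<lhd> G"
  shows "\<Inter>F \<lhd> G"
proof -
  have "subgroup (\<Inter>F) G"
    by (rule subgroups_Inter) (use assms normal_imp_subgroup in auto)
  moreover have "\<forall>x\<in>carrier G. \<forall>h\<in>\<Inter>F. x \<otimes> h \<otimes> inv x \<in> \<Inter>F"
    using assms(2) normal_inv_iff by blast
  ultimately show ?thesis
    using normal_inv_iff by blast
qed

definition brace_ideal_generated :: "'a monoid \<Rightarrow> 'a monoid \<Rightarrow> 'a set \<Rightarrow> 'a set" where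
  "brace_ideal_generated P C X = \<Inter>{J. brace_ideal P C J \<and> X \<subseteq> J}"

lemma prime_ideal_imp_brace_ideal: "prime_ideal P C Q \<Longrightarrow> brace_ideal P C Q"
  unfolding prime_ideal_def by blast

lemma Hset_brace_ideal_generated:
  "Hset P C (brace_ideal_generated P C X) = {Q \<in> Spec P C. X \<subseteq> Q}"
  unfolding Hset_def Spec_def brace_ideal_generated_def
  using prime_ideal_imp_brace_ideal by blast

lemma subset_Hset_iff_subset_Kset:
  assumes "I \<subseteq> carrier C" and "S \<subseteq> Spec P C"
  shows "S \<subseteq> Hset P C I \<longleftrightarrow> I \<subseteq> Kset P C S"
  using assms unfolding Hset_def Kset_def by blast

locale group_pair = p: group P + c: group C for P C :: "'a monoid" +
  assumes carrier_eq: "carrier P = carrier C"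

lemma skew_brace_imp_group_pair: "skew_brace P C \<Longrightarrow> group_pair P C"
  unfolding skew_brace_def group_pair_def group_pair_axioms_def by blast

context group_pair
begin

lemma brace_ideal_carrier: "brace_ideal P C (carrier C)"
proof -
  have "carrier P \<lhd> P"
    using p.normal_inv_iff p.subgroup_self by auto
  then have "carrier C \<lhd> P"
    by (simp only: carrier_eq)
  moreover have "carrier C \<lhd> C"
    using c.normal_inv_iff c.subgroup_self by auto
  moreover have "brace_lambda P C a ` carrier C \<subseteq> carrier C" if "a \<in> carrier C" for a
    using that carrier_eq unfolding brace_lambda_def by auto
  ultimately show ?thesis
    unfolding brace_ideal_def by blast
qed

lemma brace_ideal_Inter:
  assumes "F \<noteq> {}" and "\<And>I. I \<in> F \<Longrightarrow> brace_ideal P C I"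
  shows "brace_ideal P C (\<Inter>F)"
proof -
  have "\<Inter>F \<lhd> P" and "\<Inter>F \<lhd> C"
    using p.normal_Inter c.normal_Inter assms unfolding brace_ideal_def by blast+
  then show ?thesis
    using assms unfolding brace_ideal_def by blast
qed

lemma brace_ideal_brace_ideal_generated:
  assumes "X \<subseteq> carrier C"
  shows "brace_ideal P C (brace_ideal_generated P C X)"
  unfolding brace_ideal_generated_def
  by (rule brace_ideal_Inter) (use assms brace_ideal_carrier in auto)

lemma brace_ideal_Kset:
  assumes "S \<subseteq> Spec P C"
  shows "brace_ideal P C (Kset P C S)"
proof -
  have "Kset P C S = \<Inter>(insert (carrier C) S)"
    unfolding Kset_def by auto
  also have "brace_ideal P C \<dots>"
    by (rule brace_ideal_Inter)
      (use assms brace_ideal_carrier prime_ideal_imp_brace_ideal in \<open>auto simp: Spec_def\<close>)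
  finally show ?thesis .
qed

lemma brace_star_mem_right:
  assumes I: "brace_ideal P C I" and x: "x \<in> carrier C" and y: "y \<in> I"
  shows "brace_star P C x y \<in> I"
proof -
  have "subgroup I P" and "brace_lambda P C x y \<in> I"
    using I x y normal_imp_subgroup unfolding brace_ideal_def by blast+
  moreover have "brace_star P C x y = brace_lambda P C x y \<otimes>\<^bsub>P\<^esub> inv\<^bsub>P\<^esub> y"
    unfolding brace_star_def brace_lambda_def ..
  ultimately show ?thesis
    using y by (simp add: subgroup.m_closed subgroup.m_inv_closed)
qed

lemma brace_star_mem_left:
  assumes I: "brace_ideal P C I" and x: "x \<in> I" and y: "y \<in> carrier C"
  shows "brace_star P C x y \<in> I"
proof -
  have IP: "I \<lhd> P" and IC: "I \<lhd> C" and "I \<subseteq> carrier C"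
    using I unfolding brace_ideal_def by blast+
  with x have xC: "x \<in> carrier C" by blast
  \<comment> \<open>Move x past y in (A,\<circ>), then turn y \<circ> x' into y + \<lambda>_y(x') and conjugate in (A,+).\<close>
  define x' where "x' = inv\<^bsub>C\<^esub> y \<otimes>\<^bsub>C\<^esub> x \<otimes>\<^bsub>C\<^esub> y"
  define l where "l = brace_lambda P C y x'"
  have x'I: "x' \<in> I"
    unfolding x'_def using IC c.normal_inv_iff x y by (metis c.inv_closed c.inv_inv)
  then have lI: "l \<in> I"
    unfolding l_def using I y unfolding brace_ideal_def by blast
  have x'C: "x' \<in> carrier C"
    using x'I \<open>I \<subseteq> carrier C\<close> by blast
  have xP: "x \<in> carrier P" and yP: "y \<in> carrier P" and "y \<otimes>\<^bsub>C\<^esub> x' \<in> carrier P"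
    and lP: "l \<in> carrier P"
    using xC y x'C lI \<open>I \<subseteq> carrier C\<close> carrier_eq by auto
  have "x \<otimes>\<^bsub>C\<^esub> y = y \<otimes>\<^bsub>C\<^esub> x'"
    unfolding x'_def using xC y by (simp add: c.m_assoc[symmetric])
  also have "\<dots> = y \<otimes>\<^bsub>P\<^esub> l"
    unfolding l_def brace_lambda_def using yP \<open>y \<otimes>\<^bsub>C\<^esub> x' \<in> carrier P\<close>
    by (simp add: p.m_assoc[symmetric])
  finally have "brace_star P C x y = inv\<^bsub>P\<^esub> x \<otimes>\<^bsub>P\<^esub> (y \<otimes>\<^bsub>P\<^esub> l \<otimes>\<^bsub>P\<^esub> inv\<^bsub>P\<^esub> y)"
    unfolding brace_star_def using xP yP lP by (simp add: p.m_assoc)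
  moreover have "y \<otimes>\<^bsub>P\<^esub> l \<otimes>\<^bsub>P\<^esub> inv\<^bsub>P\<^esub> y \<in> I"
    using IP p.normal_inv_iff yP lI by blast
  ultimately show ?thesis
    using x normal_imp_subgroup[OF IP] by (simp add: subgroup.m_closed subgroup.m_inv_closed)
qed

lemma prime_ideal_Int_subsetD:
  assumes Q: "prime_ideal P C Q" and I: "brace_ideal P C I" and J: "brace_ideal P C J"
    and "I \<inter> J \<subseteq> Q"
  shows "I \<subseteq> Q \<or> J \<subseteq> Q"
proof -
  have "I \<subseteq> carrier C" and "J \<subseteq> carrier C"
    using I J unfolding brace_ideal_def by blast+
  moreover have "{brace_star P C x y | x y. x \<in> I \<and> y \<in> J} \<subseteq> Q"
    using brace_star_mem_left[OF I] brace_star_mem_right[OF J] calculation \<open>I \<inter> J \<subseteq> Q\<close>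
    by blast
  ultimately show ?thesis
    using Q unfolding prime_ideal_def by blast
qed

lemma Hset_Int:
  assumes "brace_ideal P C I" and "brace_ideal P C J"
  shows "Hset P C (I \<inter> J) = Hset P C I \<union> Hset P C J"
  using prime_ideal_Int_subsetD[OF _ assms] unfolding Hset_def Spec_def by blast


lemma istopology_spectral:
  "istopology (\<lambda>U. U \<subseteq> Spec P C \<and> (\<exists>I. brace_ideal P C I \<and> Spec P C - U = Hset P C I))"
  unfolding istopology_def
proof (rule conjI; intro allI impI)
  fix U V
  assume "U \<subseteq> Spec P C \<and> (\<exists>I. brace_ideal P C I \<and> Spec P C - U = Hset P C I)"
    and "V \<subseteq> Spec P C \<and> (\<exists>J. brace_ideal P C J \<and> Spec P C - V = Hset P C J)"
  then obtain I J where "U \<subseteq> Spec P C" and I: "brace_ideal P C I" "Spec P C - U = Hset P C I"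
    and J: "brace_ideal P C J" "Spec P C - V = Hset P C J"
    by blast
  moreover have "brace_ideal P C (I \<inter> J)"
    using brace_ideal_Inter[of "{I, J}"] I J by auto
  moreover have "Spec P C - (U \<inter> V) = Hset P C (I \<inter> J)"
    using Hset_Int I J by blast
  ultimately show "U \<inter> V \<subseteq> Spec P C \<and>
      (\<exists>I. brace_ideal P C I \<and> Spec P C - U \<inter> V = Hset P C I)"
    by blast
next
  fix \<U>
  assume "\<forall>U\<in>\<U>. U \<subseteq> Spec P C \<and> (\<exists>I. brace_ideal P C I \<and> Spec P C - U = Hset P C I)"
  then obtain f where \<U>: "\<And>U. U \<in> \<U> \<Longrightarrow> U \<subseteq> Spec P C"
    and f: "\<And>U. U \<in> \<U> \<Longrightarrow> brace_ideal P C (f U) \<and> Spec P C - U = Hset P C (f U)"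
    by metis
  let ?I = "brace_ideal_generated P C (\<Union>(f ` \<U>))"
  have "\<Union>(f ` \<U>) \<subseteq> carrier C"
    using f unfolding brace_ideal_def by blast
  then have "brace_ideal P C ?I"
    by (rule brace_ideal_brace_ideal_generated)
  moreover have "Spec P C - \<Union>\<U> = Hset P C ?I"
    unfolding Hset_brace_ideal_generated using f unfolding Hset_def by blast
  ultimately show "\<Union>\<U> \<subseteq> Spec P C \<and> (\<exists>I. brace_ideal P C I \<and> Spec P C - \<Union>\<U> = Hset P C I)"
    using \<U> by blast
qed

lemma openin_spectral_topology:
  "openin (spectral_topology P C) U \<longleftrightarrow>
    U \<subseteq> Spec P C \<and> (\<exists>I. brace_ideal P C I \<and> Spec P C - U = Hset P C I)"
  unfolding spectral_topology_def using istopology_spectral by simp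

lemma topspace_spectral_topology: "topspace (spectral_topology P C) = Spec P C"
proof -
  have "Hset P C (carrier C) = {}"
    unfolding Hset_def Spec_def prime_ideal_def brace_ideal_def by blast
  then have "openin (spectral_topology P C) (Spec P C)"
    using openin_spectral_topology brace_ideal_carrier by auto
  then show ?thesis
    unfolding topspace_def using openin_spectral_topology by blast
qed

lemma closedin_spectral_topology:
  "closedin (spectral_topology P C) F \<longleftrightarrow> (\<exists>I. brace_ideal P C I \<and> F = Hset P C I)"
  unfolding closedin_def topspace_spectral_topology openin_spectral_topology
  by (auto simp: Hset_def)

lemma closure_of_spectral_topology:
  assumes S: "S \<subseteq> Spec P C"
  shows "spectral_topology P C closure_of S = Hset P C (Kset P C S)"
proof (rule closure_of_unique)
  have "Kset P C S \<subseteq> carrier C"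
    unfolding Kset_def by blast
  then show "S \<subseteq> Hset P C (Kset P C S)"
    using subset_Hset_iff_subset_Kset[OF _ S] by simp
  show "closedin (spectral_topology P C) (Hset P C (Kset P C S))"
    unfolding closedin_spectral_topology using brace_ideal_Kset[OF S] by blast
next
  fix F
  assume "S \<subseteq> F" and "closedin (spectral_topology P C) F"
  then obtain I where I: "brace_ideal P C I" and F: "F = Hset P C I"
    unfolding closedin_spectral_topology by blast
  have "I \<subseteq> carrier C"
    using I unfolding brace_ideal_def by blast
  moreover have "S \<subseteq> Hset P C I"
    using \<open>S \<subseteq> F\<close> F by simp
  ultimately have "I \<subseteq> Kset P C S"
    using subset_Hset_iff_subset_Kset[OF _ S] by simp
  then show "Hset P C (Kset P C S) \<subseteq> F"
    unfolding F Hset_def by blast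
qed

end

theorem theorem4p4:
  fixes P C :: "'a monoid" and T :: "'i \<Rightarrow> 'a set set" and \<Lambda> :: "'i set"
  assumes "skew_brace P C"
  shows "Kset P C {} = carrier C
    \<and> ((\<forall>l\<in>\<Lambda>. T l \<subseteq> Spec P C) \<longrightarrow>
         Kset P C (\<Union>l\<in>\<Lambda>. T l) = carrier C \<inter> (\<Inter>l\<in>\<Lambda>. Kset P C (T l)))
    \<and> (\<forall>I. brace_ideal P C I \<longrightarrow> Kset P C (Hset P C I) = Rad P C I)
    \<and> (\<forall>S. S \<subseteq> Spec P C \<longrightarrow>
         Hset P C (Kset P C S) = spectral_topology P C closure_of S)"
proof (intro conjI impI allI)
  interpret group_pair P C
    using assms by (rule skew_brace_imp_group_pair)
  show "Kset P C {} = carrier C"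
    unfolding Kset_def by simp
  show "Kset P C (\<Union>l\<in>\<Lambda>. T l) = carrier C \<inter> (\<Inter>l\<in>\<Lambda>. Kset P C (T l))"
    unfolding Kset_def by blast
  show "Kset P C (Hset P C I) = Rad P C I" for I
    unfolding Kset_def Rad_def ..
  show "Hset P C (Kset P C S) = spectral_topology P C closure_of S" if "S \<subseteq> Spec P C" for S
    using closure_of_spectral_topology[OF that] by simp
qed

end
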